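(* Let $\gamma,\lambda\in\mathbb{C}$ and let $\phi:\mathbb{Z}^2\to\mathbb{C}$ be a (generic, nonvanishing) solution of \[ \frac{\big(\gamma\widetilde{\overline\phi}+\lambda\phi\big)\big(\overline\phi-\gamma\widetilde\phi\big)}{\big(\widetilde{\overline\phi}-\overline\phi\big)\big(\widetilde\phi-\phi\big)}=1-\gamma^2. \] Then \[ u=\frac{\phi-\widetilde\phi}{\gamma\phi-\overline\phi},\qquad v=\frac{\overline\phi}{\phi} \] satisfy respectively the lattice sine-Gordon equation $\frac{\widetilde{\overline u}}{u}=\frac{(\gamma\widetilde u-1)(\gamma-\overline u)}{(\gamma-\widetilde u)(\gamma\overline u-1)}$ and the equation \[ \begin{aligned} &\gamma^2\big(v-\widetilde{\overline v}\big)\big(\overline v-\widetilde v\big)\big(\lambda+v\overline v\big)\big(\lambda+\widetilde v\widetilde{\overline v}\big)-(1-\gamma^2)(\gamma^2-\lambda)\big(v\overline v-\widetilde v\widetilde{\overline v}\big)^2\\ &\quad+\gamma(1-\gamma^2)\big(v\overline v-\widetilde v\widetilde{\overline v}\big)\Big(\big(\lambda+v\overline v\big)\big(\widetilde v+\widetilde{\overline v}\big)-\big(v+\overline v\big)\big(\lambda+\widetilde v\widetilde{\overline v}\big)\Big)=0. \end{aligned} \]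
   Context: Shift notation: for $f:\mathbb{Z}^2\to\mathbb{C}$, $f=f_{l,m}$, $\overline f=f_{l+1,m}$, $\widetilde f=f_{l,m+1}$, $\widetilde{\overline f}=f_{l+1,m+1}$. *)

theory Defs
  imports Complex_Main
begin

text \<open>Lattice fields are functions phi :: int => int => complex, with
  phi l m = f_{l,m}; the shifts are bar f = f (l+1) m, tilde f = f l (m+1).\<close>

end

theory Submission
  imports Defs
begin

text \<open>Both equations are consequences of the quad equation for \<open>\<phi>\<close> on a few neighbouring
  squares. Cleared of denominators, the equation for \<open>u\<close> lies in the ideal generated by the
  quad equations on the three squares of an L-shaped block, and the equation for \<open>v\<close> in the
  ideal generated by those on two horizontally adjacent squares; the genericity assumptions allow
  the denominators to be divided out again.\<close>

text \<open>The corners \<open>a, b, c, d\<close> of \<open>phi_quad\<close> are the values at \<open>(l,m), (l+1,m), (l,m+1),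
  (l+1,m+1)\<close>; in the lemmas below \<open>pij\<close> is the value at \<open>(l+i, m+j)\<close>.\<close>

definition phi_quad :: "'a::comm_ring_1 \<Rightarrow> 'a \<Rightarrow> 'a \<Rightarrow> 'a \<Rightarrow> 'a \<Rightarrow> 'a \<Rightarrow> bool" where
  "phi_quad g L a b c d \<longleftrightarrow> (g*d + L*a) * (b - g*c) = (1 - g^2) * (d - b) * (c - a)"

lemma phi_quad_iff_ratio:
  fixes g L a b c d :: "'a::field"
  assumes "(d - b) * (c - a) \<noteq> 0"
  shows "(g*d + L*a) * (b - g*c) / ((d - b) * (c - a)) = 1 - g^2 \<longleftrightarrow> phi_quad g L a b c d"
  using assms unfolding phi_quad_def by (simp add: divide_eq_eq mult.assoc)

lemma lattice_sine_Gordon_of_quads: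
  fixes g L p00 p10 p20 p01 p11 p21 p02 p12 u00 u10 u01 u11 :: "'a::field"
  assumes quads: "phi_quad g L p00 p10 p01 p11" "phi_quad g L p10 p20 p11 p21"
      "phi_quad g L p01 p11 p02 p12"
    and denoms: "g*p00 - p10 \<noteq> 0" "g*p10 - p20 \<noteq> 0" "g*p01 - p11 \<noteq> 0" "g*p11 - p21 \<noteq> 0"
    and u: "p00 - p01 = u00 * (g*p00 - p10)" "p10 - p11 = u10 * (g*p10 - p20)"
      "p01 - p02 = u01 * (g*p01 - p11)" "p11 - p12 = u11 * (g*p11 - p21)"
    and nonzero: "u00 \<noteq> 0" "g - u01 \<noteq> 0" "g*u10 - 1 \<noteq> 0"
  shows "u11 / u00 = ((g*u01 - 1) * (g - u10)) / ((g - u01) * (g*u10 - 1))"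
proof -
  have "(p11 - p12) * (g*(g*p01 - p11) - (p01 - p02)) * (g*(p10 - p11) - (g*p10 - p20)) * (g*p00 - p10)
      = (p00 - p01) * (g*(p01 - p02) - (g*p01 - p11)) * (g*(g*p10 - p20) - (p10 - p11)) * (g*p11 - p21)"
    using quads unfolding phi_quad_def by algebra
  then have "(u11 * (g - u01) * (g*u10 - 1)) * ((g*p00 - p10) * (g*p10 - p20) * (g*p01 - p11) * (g*p11 - p21))
      = (u00 * (g*u01 - 1) * (g - u10)) * ((g*p00 - p10) * (g*p10 - p20) * (g*p01 - p11) * (g*p11 - p21))"
    using u by algebra
  with denoms have "u11 * (g - u01) * (g*u10 - 1) = u00 * (g*u01 - 1) * (g - u10)"
    by simp
  with nonzero show ?thesis
    by (simp add: frac_eq_eq mult_ac)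
qed

lemma v_equation_of_quads:
  fixes g L p00 p10 p20 p01 p11 p21 v00 v10 v01 v11 :: "'a::idom"
  assumes quads: "phi_quad g L p00 p10 p01 p11" "phi_quad g L p10 p20 p11 p21"
    and nonzero: "p00 \<noteq> 0" "p10 \<noteq> 0" "p01 \<noteq> 0" "p11 \<noteq> 0"
    and v: "p10 = v00 * p00" "p20 = v10 * p10" "p11 = v01 * p01" "p21 = v11 * p11"
  shows "g^2 * (v00 - v11) * (v10 - v01) * (L + v00 * v10) * (L + v01 * v11)
       - (1 - g^2) * (g^2 - L) * (v00 * v10 - v01 * v11)^2
       + g * (1 - g^2) * (v00 * v10 - v01 * v11)
           * ((L + v00 * v10) * (v01 + v11) - (v00 + v10) * (L + v01 * v11)) = 0"
    (is "?E = 0")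
proof -
  have "g^2 * (p10*p11 - p00*p21) * (p20*p01 - p10*p11) * (L*p00 + p20) * (L*p01 + p21)
      - (1 - g^2) * (g^2 - L) * (p20*p01 - p21*p00)^2 * p10 * p11
      + g * (1 - g^2) * (p20*p01 - p21*p00)
          * ((L*p00 + p20) * (p11*p11 + p21*p01) * p10 - (p10*p10 + p20*p00) * (L*p01 + p21) * p11) = 0"
    using quads unfolding phi_quad_def by algebra
  then have "?E * (p00 * p00 * p10 * p01 * p01 * p11) = 0"
    using v by algebra
  with nonzero show ?thesis
    by simp
qed

theorem mainTheorem12:
  fixes \<gamma> lam :: complex
    and \<phi> u v :: "int \<Rightarrow> int \<Rightarrow> complex"
  defines "u \<equiv> (\<lambda>l m. (\<phi> l m - \<phi> l (m+1)) / (\<gamma> * \<phi> l m - \<phi> (l+1) m))"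
    and "v \<equiv> (\<lambda>l m. \<phi> (l+1) m / \<phi> l m)"
  assumes nonvanishing: "\<And>l m. \<phi> l m \<noteq> 0"
    and gen1: "\<And>l m. \<phi> (l+1) (m+1) - \<phi> (l+1) m \<noteq> 0"
    and gen2: "\<And>l m. \<phi> l (m+1) - \<phi> l m \<noteq> 0"
    and gen3: "\<And>l m. \<gamma> * \<phi> l m - \<phi> (l+1) m \<noteq> 0"
    and gen4: "\<And>l m. \<gamma> - u l m \<noteq> 0"
    and gen5: "\<And>l m. \<gamma> * u l m - 1 \<noteq> 0"
    and eq: "\<And>l m. ((\<gamma> * \<phi> (l+1) (m+1) + lam * \<phi> l m) * (\<phi> (l+1) m - \<gamma> * \<phi> l (m+1)))
                     / ((\<phi> (l+1) (m+1) - \<phi> (l+1) m) * (\<phi> l (m+1) - \<phi> l m)) = 1 - \<gamma>\<^sup>2"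
  shows "(\<forall>l m. u (l+1) (m+1) / u l m
            = ((\<gamma> * u l (m+1) - 1) * (\<gamma> - u (l+1) m)) / ((\<gamma> - u l (m+1)) * (\<gamma> * u (l+1) m - 1)))
       \<and> (\<forall>l m.
            \<gamma>\<^sup>2 * (v l m - v (l+1) (m+1)) * (v (l+1) m - v l (m+1))
               * (lam + v l m * v (l+1) m) * (lam + v l (m+1) * v (l+1) (m+1))
            - (1 - \<gamma>\<^sup>2) * (\<gamma>\<^sup>2 - lam) * (v l m * v (l+1) m - v l (m+1) * v (l+1) (m+1))\<^sup>2
            + \<gamma> * (1 - \<gamma>\<^sup>2) * (v l m * v (l+1) m - v l (m+1) * v (l+1) (m+1))
               * ((lam + v l m * v (l+1) m) * (v l (m+1) + v (l+1) (m+1))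
                  - (v l m + v (l+1) m) * (lam + v l (m+1) * v (l+1) (m+1))) = 0)"
proof -
  have quad: "phi_quad \<gamma> lam (\<phi> l m) (\<phi> (l+1) m) (\<phi> l (m+1)) (\<phi> (l+1) (m+1))" for l m
    using eq[of l m] gen1[of l m] gen2[of l m] by (simp add: phi_quad_iff_ratio)
  have u_num: "\<phi> l m - \<phi> l (m+1) = u l m * (\<gamma> * \<phi> l m - \<phi> (l+1) m)" for l m
    using gen3[of l m] by (simp add: u_def)
  have u_nonzero: "u l m \<noteq> 0" for l m
    using gen2[of l m] gen3[of l m] by (simp add: u_def)
  have v_ratio: "\<phi> (l+1) m = v l m * \<phi> l m" for l m
    using nonvanishing[of l m] by (simp add: v_def)
  show ?thesis
    apply (intro conjI allI)
    subgoal for l m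
      using quad[of l m] quad[of "l+1" m] quad[of l "m+1"]
        gen3[of l m] gen3[of "l+1" m] gen3[of l "m+1"] gen3[of "l+1" "m+1"]
        u_num[of l m] u_num[of "l+1" m] u_num[of l "m+1"] u_num[of "l+1" "m+1"]
        u_nonzero[of l m] gen4[of l "m+1"] gen5[of "l+1" m]
      by (rule lattice_sine_Gordon_of_quads)
    subgoal for l m
      using quad[of l m] quad[of "l+1" m]
        nonvanishing[of l m] nonvanishing[of "l+1" m] nonvanishing[of l "m+1"] nonvanishing[of "l+1" "m+1"]
        v_ratio[of l m] v_ratio[of "l+1" m] v_ratio[of l "m+1"] v_ratio[of "l+1" "m+1"]
      by (rule v_equation_of_quads)
    done
qed

end
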